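(* Let $n\ge2$ and let $P_m(u)=u^m+a_1u^{m-1}+\cdots+a_{m-1}u+a_m$ be a polynomial of degree $m\ge1$ in the polar $n$-complex variable $u$ with polar $n$-complex coefficients $a_l$. Then there exist complex numbers $v_{p+}$ ($p=1,\dots,m$), whose non-real members occur in complex-conjugate pairs, and for even $n$ complex numbers $v_{p-}$ ($p=1,\dots,m$) with the same property, and real numbers $v_{kp},\tilde v_{kp}$ ($k=1,\dots,\lfloor(n-1)/2\rfloor$, $p=1,\dots,m$), such that for every polar $n$-complex $u$ $$P_m(u)=\prod_{p=1}^m(u-u_p),\qquad u_p=e_+v_{p+}+e_-v_{p-}+\sum_{k=1}^{\lfloor(n-1)/2\rfloor}\big(e_kv_{kp}+\tilde e_k\tilde v_{kp}\big),$$ where the $e_-$ term is present only for even $n$ and the product is computed in the complexified algebra (polar $n$-complex numbers with complex components).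
   Context: Polar $n$-complex numbers: $u=x_0+h_1x_1+\cdots+h_{n-1}x_{n-1}$, $x_j\in\mathbb{R}$, $h_0=1$, componentwise addition, bilinear multiplication $h_jh_k=h_{(j+k)\bmod n}$; the complexified algebra allows $x_j\in\mathbb{C}$ with the same rules. Canonical base: $e_+=\frac1n\sum_ph_p$, for even $n$ $e_-=\frac1n\sum_p(-1)^ph_p$, $e_k=\frac2n\sum_p\cos(2\pi kp/n)h_p$, $\tilde e_k=\frac2n\sum_p\sin(2\pi kp/n)h_p$ for $k=1,\dots,\lfloor(n-1)/2\rfloor$. *)

theory Defs
  imports Complex_Main "HOL-Library.Multiset"
begin

text \<open>Complexified polar n-complex numbers are represented as functions
  nat \<Rightarrow> complex whose components with index \<ge> n are zero; component j is the
  coefficient of h_j.  Real polar n-complex numbers are functions nat \<Rightarrow> real,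
  embedded by pcx (only components j < n are used).\<close>

definition pcx :: "nat \<Rightarrow> (nat \<Rightarrow> real) \<Rightarrow> (nat \<Rightarrow> complex)" where
  "pcx n x = (\<lambda>j. if j < n then complex_of_real (x j) else 0)"

definition padd :: "nat \<Rightarrow> (nat \<Rightarrow> complex) \<Rightarrow> (nat \<Rightarrow> complex) \<Rightarrow> (nat \<Rightarrow> complex)" where
  "padd n x y = (\<lambda>j. if j < n then x j + y j else 0)"

definition psub :: "nat \<Rightarrow> (nat \<Rightarrow> complex) \<Rightarrow> (nat \<Rightarrow> complex) \<Rightarrow> (nat \<Rightarrow> complex)" where
  "psub n x y = (\<lambda>j. if j < n then x j - y j else 0)"

definition pscale :: "nat \<Rightarrow> complex \<Rightarrow> (nat \<Rightarrow> complex) \<Rightarrow> (nat \<Rightarrow> complex)" where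
  "pscale n c x = (\<lambda>j. if j < n then c * x j else 0)"

text \<open>Bilinear multiplication with h_j h_k = h_((j+k) mod n).\<close>
definition pmul :: "nat \<Rightarrow> (nat \<Rightarrow> complex) \<Rightarrow> (nat \<Rightarrow> complex) \<Rightarrow> (nat \<Rightarrow> complex)" where
  "pmul n x y = (\<lambda>j. if j < n then
      (\<Sum>a<n. \<Sum>b<n. if (a + b) mod n = j then x a * y b else 0) else 0)"

definition pone :: "nat \<Rightarrow> (nat \<Rightarrow> complex)" where
  "pone n = (\<lambda>j. if j = 0 \<and> 0 < n then 1 else 0)"

definition ppow :: "nat \<Rightarrow> (nat \<Rightarrow> complex) \<Rightarrow> nat \<Rightarrow> (nat \<Rightarrow> complex)" where
  "ppow n x k = (pmul n x ^^ k) (pone n)"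

fun pprod :: "nat \<Rightarrow> (nat \<Rightarrow> nat \<Rightarrow> complex) \<Rightarrow> nat \<Rightarrow> (nat \<Rightarrow> complex)" where
  "pprod n f 0 = pone n"
| "pprod n f (Suc m) = pmul n (pprod n f m) (f (Suc m))"

definition polyP :: "nat \<Rightarrow> nat \<Rightarrow> (nat \<Rightarrow> nat \<Rightarrow> real) \<Rightarrow> (nat \<Rightarrow> real) \<Rightarrow> (nat \<Rightarrow> complex)" where
  "polyP n m a u = padd n (ppow n (pcx n u) m)
      (\<lambda>j. \<Sum>l\<in>{1..m}. pmul n (pcx n (a l)) (ppow n (pcx n u) (m - l)) j)"

definition eplus :: "nat \<Rightarrow> (nat \<Rightarrow> complex)" where
  "eplus n = (\<lambda>j. if j < n then complex_of_real (1 / real n) else 0)"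

definition eminus :: "nat \<Rightarrow> (nat \<Rightarrow> complex)" where
  "eminus n = (\<lambda>j. if j < n then complex_of_real ((-1) ^ j / real n) else 0)"

definition ek :: "nat \<Rightarrow> nat \<Rightarrow> (nat \<Rightarrow> complex)" where
  "ek n k = (\<lambda>j. if j < n then complex_of_real (2 / real n * cos (2 * pi * real k * real j / real n)) else 0)"

definition etk :: "nat \<Rightarrow> nat \<Rightarrow> (nat \<Rightarrow> complex)" where
  "etk n k = (\<lambda>j. if j < n then complex_of_real (2 / real n * sin (2 * pi * real k * real j / real n)) else 0)"

definition uroot :: "nat \<Rightarrow> (nat \<Rightarrow> complex) \<Rightarrow> (nat \<Rightarrow> complex) \<Rightarrow> (nat \<Rightarrow> nat \<Rightarrow> real)
    \<Rightarrow> (nat \<Rightarrow> nat \<Rightarrow> real) \<Rightarrow> nat \<Rightarrow> (nat \<Rightarrow> complex)" where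
  "uroot n vp vm v vt p = (\<lambda>j. if j < n then
      vp p * eplus n j
      + (if even n then vm p * eminus n j else 0)
      + (\<Sum>k\<in>{1..(n - 1) div 2}. complex_of_real (v k p) * ek n k j
                                + complex_of_real (vt k p) * etk n k j)
      else 0)"

text \<open>The multiset of values w_1..w_m is closed under complex conjugation, i.e. its
  non-real members occur in complex-conjugate pairs (with multiplicity).\<close>
definition conj_closed :: "(nat \<Rightarrow> complex) \<Rightarrow> nat \<Rightarrow> bool" where
  "conj_closed w m = (image_mset cnj (image_mset w (mset_set {1..m})) = image_mset w (mset_set {1..m}))"

end

theory Submission
  imports Defs "HOL-Computational_Algebra.Fundamental_Theorem_Algebra"
begin

text \<open>With \<open>w = cis (2 * pi / n)\<close>, the maps \<open>h_l \<mapsto> w ^ (j * l)\<close> for \<open>j < n\<close> are ring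
  homomorphisms from the complexified polar algebra to \<open>\<complex>\<close> that jointly separate points
  (discrete Fourier inversion). They send \<open>P_m\<close> to \<open>n\<close> monic complex polynomials, with real
  coefficients at \<open>j = 0\<close> and \<open>j = n / 2\<close> and conjugate coefficients at \<open>j\<close> and \<open>n - j\<close>.
  Conversely, the character values of \<open>u_p\<close> are \<open>vp p\<close> at \<open>j = 0\<close>, \<open>vm p\<close> at \<open>j = n / 2\<close>
  and \<open>v k p \<plusminus> \<i> * vt k p\<close> at \<open>j = k, n - k\<close>. So taking \<open>vp\<close>, \<open>vm\<close> and \<open>v + \<i> * vt\<close>
  to be the roots of the polynomials at \<open>j = 0\<close>, \<open>n / 2\<close> and \<open>k\<close> makes the factorization
  hold under every character, hence in the algebra.\<close>

definition unit_root :: "nat \<Rightarrow> complex" where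
  "unit_root n = cis (2 * pi / real n)"

definition dft :: "nat \<Rightarrow> nat \<Rightarrow> (nat \<Rightarrow> complex) \<Rightarrow> complex" where
  "dft n j x = (\<Sum>l<n. x l * unit_root n ^ (j * l))"

lemma unit_root_power: "unit_root n ^ t = cis (2 * pi * real t / real n)"
  unfolding unit_root_def DeMoivre by (simp add: field_simps)

lemma unit_root_power_self: "n > 0 \<Longrightarrow> unit_root n ^ n = 1"
  by (simp add: unit_root_power)

lemma unit_root_power_mod: "n > 0 \<Longrightarrow> unit_root n ^ (t mod n) = unit_root n ^ t"
  by (metis mult.commute mult_1 power_add power_mult power_one div_mult_mod_eq unit_root_power_self)

lemma unit_root_power_eq_1_iff:
  assumes "n > 0"
  shows "unit_root n ^ t = 1 \<longleftrightarrow> n dvd t"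
proof
  assume "unit_root n ^ t = 1"
  hence "cos (2 * pi * real t / real n) = 1"
    unfolding unit_root_power by (metis cis.sel(1) one_complex.sel(1))
  then obtain k :: int where "2 * pi * real t / real n = real_of_int k * 2 * pi"
    using cos_one_2pi_int by blast
  hence "int t = k * int n"
    using assms by (simp add: field_simps) (metis of_int_eq_iff of_int_mult of_int_of_nat_eq)
  thus "n dvd t" by (metis dvd_triv_right int_dvd_int_iff)
next
  assume "n dvd t"
  thus "unit_root n ^ t = 1" by (auto simp: power_mult unit_root_power_self[OF assms])
qed

lemma sum_unit_root_power:
  assumes "n > 0"
  shows "(\<Sum>l<n. unit_root n ^ (t * l)) = (if n dvd t then of_nat n else 0)"
proof -
  have "(\<Sum>l<n. unit_root n ^ (t * l)) = (\<Sum>l<n. (unit_root n ^ t) ^ l)"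
    by (simp add: power_mult)
  moreover have "(unit_root n ^ t) ^ n = 1"
    by (metis mult.commute power_mult power_one unit_root_power_self[OF assms])
  ultimately show ?thesis
    by (simp add: sum_gp_strict unit_root_power_eq_1_iff[OF assms])
qed

lemma unit_root_power_reflect:
  assumes "n > 0" "j \<le> n"
  shows "unit_root n ^ ((n - j) * l) = cnj (unit_root n ^ (j * l))"
proof -
  have "unit_root n ^ ((n - j) * l) = cis (2 * pi * real l + - (2 * pi * real (j * l) / real n))"
    using assms by (simp add: unit_root_power of_nat_diff field_simps)
  also have "\<dots> = cnj (unit_root n ^ (j * l))"
    by (simp only: cis_mult[symmetric]) (simp add: unit_root_power cis_cnj)
  finally show ?thesis .
qed

lemma unit_root_power_half:
  assumes "n > 0" "even n"
  shows "unit_root n ^ (n div 2 * l) = (-1) ^ l"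
proof -
  have "2 * pi * real (n div 2) / real n = pi"
    using assms by (auto simp: real_of_nat_div field_simps)
  thus ?thesis by (simp add: power_mult unit_root_power)
qed

lemma dvd_less_double_iff:
  assumes "(n::nat) > 0" "t < 2 * n"
  shows "n dvd t \<longleftrightarrow> t = 0 \<or> t = n"
proof
  assume "n dvd t"
  then obtain q where q: "t = n * q" ..
  with assms have "q < 2" by simp
  thus "t = 0 \<or> t = n" using q by (auto simp: less_2_cases_iff)
qed auto

lemma dft_padd: "dft n j (padd n x y) = dft n j x + dft n j y"
  unfolding dft_def padd_def by (simp add: sum.distrib distrib_right)

lemma dft_psub: "dft n j (psub n x y) = dft n j x - dft n j y"
  unfolding dft_def psub_def by (simp add: sum_subtractf left_diff_distrib)

lemma dft_pone: "n > 0 \<Longrightarrow> dft n j (pone n) = 1"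
  unfolding dft_def pone_def by (simp add: if_distrib if_distribR sum.delta cong: if_cong)

lemma dft_sum: "dft n j (\<lambda>i. \<Sum>l\<in>S. f l i) = (\<Sum>l\<in>S. dft n j (f l))"
  unfolding dft_def by (simp add: sum_distrib_right sum.swap[of _ S])

lemma dft_pmul:
  assumes "n > 0"
  shows "dft n j (pmul n x y) = dft n j x * dft n j y"
proof -
  let ?w = "\<lambda>k. unit_root n ^ (j * k)"
  have w_mod: "?w ((a + b) mod n) = ?w a * ?w b" for a b
    by (metis mult.commute power_add power_mult unit_root_power_mod[OF assms])
  have "dft n j (pmul n x y)
      = (\<Sum>c<n. \<Sum>a<n. \<Sum>b<n. if (a + b) mod n = c then x a * y b * ?w c else 0)"
    unfolding dft_def pmul_def by (simp add: sum_distrib_right if_distrib if_distribR cong: if_cong)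
  also have "\<dots> = (\<Sum>a<n. \<Sum>b<n. \<Sum>c<n. if (a + b) mod n = c then x a * y b * ?w c else 0)"
    by (subst sum.swap) (rule sum.cong[OF refl], rule sum.swap)
  also have "\<dots> = (\<Sum>a<n. \<Sum>b<n. x a * y b * ?w ((a + b) mod n))"
    using assms by (simp add: sum.delta')
  also have "\<dots> = (\<Sum>a<n. \<Sum>b<n. (x a * ?w a) * (y b * ?w b))"
    by (simp only: w_mod mult_ac)
  also have "\<dots> = dft n j x * dft n j y"
    unfolding dft_def by (simp add: sum_product)
  finally show ?thesis .
qed

lemma dft_ppow: "n > 0 \<Longrightarrow> dft n j (ppow n x k) = dft n j x ^ k"
  by (induction k) (simp_all add: ppow_def dft_pone dft_pmul)

lemma dft_pprod: "n > 0 \<Longrightarrow> dft n j (pprod n f m) = (\<Prod>p\<in>{1..m}. dft n j (f p))"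
  by (induction m) (simp_all add: dft_pone dft_pmul prod.nat_ivl_Suc')

lemma dft_polyP:
  "n > 0 \<Longrightarrow> dft n j (polyP n m a u) =
     dft n j (pcx n u) ^ m + (\<Sum>l\<in>{1..m}. dft n j (pcx n (a l)) * dft n j (pcx n u) ^ (m - l))"
  unfolding polyP_def by (simp add: dft_padd dft_sum dft_pmul dft_ppow)

lemma pprod_eq_0_outside: "n > 0 \<Longrightarrow> n \<le> i \<Longrightarrow> pprod n f m i = 0"
  by (cases m) (auto simp: pone_def pmul_def)

lemma dft_inverse:
  assumes "n > 0" "i < n"
  shows "(\<Sum>j<n. dft n j x * unit_root n ^ (j * (n - i))) = of_nat n * x i"
proof -
  have dvd_iff: "n dvd (l + (n - i)) \<longleftrightarrow> l = i" if "l < n" for l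
    using dvd_less_double_iff[OF assms(1), of "l + (n - i)"] that assms by auto
  have exp_add: "unit_root n ^ (j * l) * unit_root n ^ (j * (n - i)) = unit_root n ^ ((l + (n - i)) * j)"
    for j l by (metis power_add add_mult_distrib mult.commute)
  have "(\<Sum>j<n. dft n j x * unit_root n ^ (j * (n - i)))
      = (\<Sum>j<n. \<Sum>l<n. x l * unit_root n ^ ((l + (n - i)) * j))"
    unfolding dft_def sum_distrib_right by (simp only: mult.assoc exp_add)
  also have "\<dots> = (\<Sum>l<n. x l * (\<Sum>j<n. unit_root n ^ ((l + (n - i)) * j)))"
    by (subst sum.swap) (simp add: sum_distrib_left)
  also have "\<dots> = (\<Sum>l<n. if l = i then x l * of_nat n else 0)"
    by (intro sum.cong refl) (simp add: sum_unit_root_power[OF assms(1)] dvd_iff)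
  also have "\<dots> = of_nat n * x i"
    using assms(2) by (simp add: sum.delta)
  finally show ?thesis .
qed

lemma dft_injective:
  assumes "n > 0" and "\<And>i. n \<le> i \<Longrightarrow> x i = 0" and "\<And>i. n \<le> i \<Longrightarrow> y i = 0"
    and "\<And>j. j < n \<Longrightarrow> dft n j x = dft n j y"
  shows "x = y"
proof
  fix i
  show "x i = y i"
  proof (cases "i < n")
    case True
    have "of_nat n * x i = of_nat n * y i"
      using assms(4) by (simp add: dft_inverse[OF assms(1) True, symmetric])
    thus ?thesis using assms(1) by simp
  qed (simp add: assms(2,3))
qed

lemma dft_pcx_reflect:
  "n > 0 \<Longrightarrow> j \<le> n \<Longrightarrow> dft n (n - j) (pcx n x) = cnj (dft n j (pcx n x))"
  unfolding dft_def pcx_def by (simp add: unit_root_power_reflect)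

lemma dft_pcx_real:
  assumes "n > 0" "j = 0 \<or> 2 * j = n"
  shows "dft n j (pcx n x) \<in> \<real>"
  using assms(2)
proof
  assume "j = 0"
  thus ?thesis unfolding dft_def pcx_def by (auto intro!: sum_in_Reals)
next
  assume "2 * j = n"
  hence "n - j = j" by simp
  thus ?thesis using dft_pcx_reflect[OF assms(1), of j x] by (simp add: Reals_cnj_iff)
qed

definition fourier_mode :: "nat \<Rightarrow> nat \<Rightarrow> (nat \<Rightarrow> complex)" where
  "fourier_mode n s = (\<lambda>l. if l < n then unit_root n ^ (s * l) else 0)"

lemma dft_pscale: "dft n j (pscale n c x) = c * dft n j x"
  unfolding dft_def pscale_def by (simp add: sum_distrib_left mult.assoc)

lemma dft_fourier_mode:
  assumes "n > 0"
  shows "dft n j (fourier_mode n s) = (if n dvd (s + j) then of_nat n else 0)"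
proof -
  have "dft n j (fourier_mode n s) = (\<Sum>l<n. unit_root n ^ ((s + j) * l))"
    unfolding dft_def fourier_mode_def by (intro sum.cong refl) (simp add: add_mult_distrib power_add)
  thus ?thesis by (simp add: sum_unit_root_power[OF assms])
qed

lemma eplus_fourier_mode: "eplus n = pscale n (1 / of_nat n) (fourier_mode n 0)"
  by (auto simp: eplus_def pscale_def fourier_mode_def of_real_divide)

lemma eminus_fourier_mode:
  "n > 0 \<Longrightarrow> even n \<Longrightarrow> eminus n = pscale n (1 / of_nat n) (fourier_mode n (n div 2))"
  by (auto simp: eminus_def pscale_def fourier_mode_def unit_root_power_half of_real_divide)

lemma ek_fourier_mode:
  assumes "n > 0" "k \<le> n"
  shows "ek n k = padd n (pscale n (1 / of_nat n) (fourier_mode n k))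
                         (pscale n (1 / of_nat n) (fourier_mode n (n - k)))"
    and "etk n k = padd n (pscale n (- \<i> / of_nat n) (fourier_mode n k))
                         (pscale n (\<i> / of_nat n) (fourier_mode n (n - k)))"
  using unit_root_power_reflect[OF assms]
  by (simp_all add: fun_eq_iff ek_def etk_def padd_def pscale_def fourier_mode_def
      unit_root_power complex_eq_iff mult.assoc del: complex_cnj_power)

lemma dft_eplus:
  assumes "n > 0" "j < n"
  shows "dft n j (eplus n) = (if j = 0 then 1 else 0)"
proof -
  have "n dvd j \<longleftrightarrow> j = 0"
    using dvd_less_double_iff[OF assms(1), of j] assms by auto
  thus ?thesis using assms by (simp add: eplus_fourier_mode dft_pscale dft_fourier_mode)
qed

lemma dft_eminus:
  assumes "n > 0" "even n" "j < n"
  shows "dft n j (eminus n) = (if 2 * j = n then 1 else 0)"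
proof -
  have "n dvd (n div 2 + j) \<longleftrightarrow> 2 * j = n"
    using dvd_less_double_iff[OF assms(1), of "n div 2 + j"] assms by auto
  thus ?thesis
    using assms by (simp add: eminus_fourier_mode dft_pscale dft_fourier_mode)
qed

lemma dft_ek:
  assumes "n > 0" "1 \<le> k" "k < n" "j < n"
  shows "dft n j (ek n k) = (if j = k then 1 else 0) + (if j = n - k then 1 else 0)"
    and "dft n j (etk n k) = (if j = k then \<i> else 0) - (if j = n - k then \<i> else 0)"
proof -
  have "n dvd (k + j) \<longleftrightarrow> j = n - k" "n dvd (n - k + j) \<longleftrightarrow> j = k"
    using dvd_less_double_iff[OF assms(1), of "k + j"] dvd_less_double_iff[OF assms(1), of "n - k + j"] assms
    by auto
  thus "dft n j (ek n k) = (if j = k then 1 else 0) + (if j = n - k then 1 else 0)"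
    and "dft n j (etk n k) = (if j = k then \<i> else 0) - (if j = n - k then \<i> else 0)"
    using assms by (simp_all add: ek_fourier_mode dft_padd dft_pscale dft_fourier_mode)
qed

lemma dft_uroot_canonical:
  "dft n j (uroot n vp vm v vt p) = vp p * dft n j (eplus n)
     + (if even n then vm p * dft n j (eminus n) else 0)
     + (\<Sum>k\<in>{1..(n - 1) div 2}. complex_of_real (v k p) * dft n j (ek n k)
                              + complex_of_real (vt k p) * dft n j (etk n k))"
proof -
  define K where "K = {1..(n - 1) div 2}"
  define w where "w l = unit_root n ^ (j * l)" for l
  have "dft n j (uroot n vp vm v vt p) = (\<Sum>l<n. (vp p * eplus n l
      + (if even n then vm p * eminus n l else 0)
      + (\<Sum>k\<in>K. complex_of_real (v k p) * ek n k l + complex_of_real (vt k p) * etk n k l)) * w l)"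
    unfolding dft_def uroot_def K_def w_def by (intro sum.cong refl) simp
  also have "\<dots> = (\<Sum>l<n. vp p * (eplus n l * w l))
      + (\<Sum>l<n. if even n then vm p * (eminus n l * w l) else 0)
      + (\<Sum>l<n. \<Sum>k\<in>K. complex_of_real (v k p) * (ek n k l * w l)
                       + complex_of_real (vt k p) * (etk n k l * w l))"
    by (cases "even n") (simp_all add: distrib_right sum.distrib sum_distrib_right mult.assoc)
  also have "\<dots> = vp p * dft n j (eplus n) + (if even n then vm p * dft n j (eminus n) else 0)
      + (\<Sum>k\<in>K. complex_of_real (v k p) * dft n j (ek n k) + complex_of_real (vt k p) * dft n j (etk n k))"
    unfolding dft_def w_def by (simp add: sum_distrib_left sum.distrib sum.swap[of _ K])
  finally show ?thesis unfolding K_def .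
qed

lemma dft_uroot:
  assumes "n > 0" "j < n"
  shows "dft n j (uroot n vp vm v vt p) =
    (if j = 0 then vp p
     else if 2 * j = n then vm p
     else if 2 * j < n then complex_of_real (v j p) + \<i> * complex_of_real (vt j p)
     else complex_of_real (v (n - j) p) - \<i> * complex_of_real (vt (n - j) p))"
proof -
  let ?K = "{1..(n - 1) div 2}"
  have j_in_K: "j \<in> ?K \<longleftrightarrow> j \<noteq> 0 \<and> 2 * j < n"
    and reflected_in_K: "n - j \<in> ?K \<longleftrightarrow> n < 2 * j"
    using assms by auto
  have "(\<Sum>k\<in>?K. complex_of_real (v k p) * dft n j (ek n k) + complex_of_real (vt k p) * dft n j (etk n k))
      = (\<Sum>k\<in>?K. (if k = j then complex_of_real (v k p) + \<i> * complex_of_real (vt k p) else 0)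
               + (if k = n - j then complex_of_real (v k p) - \<i> * complex_of_real (vt k p) else 0))"
    using assms by (intro sum.cong refl) (auto simp: dft_ek algebra_simps)
  also have "\<dots> = (if j \<in> ?K then complex_of_real (v j p) + \<i> * complex_of_real (vt j p) else 0)
      + (if n - j \<in> ?K then complex_of_real (v (n - j) p) - \<i> * complex_of_real (vt (n - j) p) else 0)"
    by (simp only: sum.distrib sum.delta finite_atLeastAtMost)
  finally show ?thesis
    unfolding dft_uroot_canonical using assms j_in_K reflected_in_K
    by (auto simp: dft_eplus dft_eminus)
qed

lemma proots_prod_linear_factors: "proots (\<Prod>x\<in>#N. [:-x, 1:]) = (N :: 'a :: idom multiset)"
proof (induction N)
  case (add x N)
  have "[:-x, 1:] * (\<Prod>x\<in>#N. [:-x, 1:]) \<noteq> 0"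
    by (auto simp: prod_mset_zero_iff simp del: mult_pCons_left)
  with add.IH show ?case by (simp add: proots_mult del: mult_pCons_left)
qed simp

lemma proots_cnj_real_poly:
  fixes p :: "complex poly"
  assumes "\<And>i. coeff p i \<in> \<real>"
  shows "image_mset cnj (proots p) = proots p"
proof (cases "p = 0")
  case False
  let ?c = "lead_coeff p"
  define q where "q = smult ?c (\<Prod>x\<in>#image_mset cnj (proots p). [:-x, 1:])"
  have cnj_prod: "cnj (\<Prod>x\<in>#M. f x) = (\<Prod>x\<in>#M. cnj (f x))" for M and f :: "complex \<Rightarrow> complex"
    by (induction M) auto
  have "poly q z = poly p z" for z
  proof -
    have "poly q z = cnj (?c * (\<Prod>x\<in>#proots p. cnj z - x))"
      using assms[of "degree p"]
      by (simp add: q_def poly_prod_mset multiset.map_comp o_def cnj_prod Reals_cnj_iff)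
    also have "?c * (\<Prod>x\<in>#proots p. cnj z - x) = poly p (cnj z)"
      using arg_cong[OF complex_poly_decompose_multiset[of p], of "\<lambda>q. poly q (cnj z)"]
      by (simp add: poly_prod_mset)
    also have "cnj (poly p (cnj z)) = poly p z"
      using poly_cnj_real[of p "cnj z"] assms by simp
    finally show ?thesis .
  qed
  hence "q = p" using poly_eq_poly_eq_iff by blast
  moreover have "proots q = image_mset cnj (proots p)"
    using False by (simp add: q_def proots_prod_linear_factors)
  ultimately show ?thesis by simp
qed simp

lemma image_mset_nth_pred: "image_mset (\<lambda>p. xs ! (p - 1)) (mset_set {1..length xs}) = mset xs"
proof -
  have "mset_set {1..length xs} = image_mset Suc (mset_set {0..<length xs})"
    by (subst image_mset_mset_set) (auto simp: atLeastLessThanSuc_atLeastAtMost[symmetric])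
  hence "image_mset (\<lambda>p. xs ! (p - 1)) (mset_set {1..length xs}) = mset (map (nth xs) [0..<length xs])"
    by (simp add: multiset.map_comp o_def)
  thus ?thesis by (simp add: map_nth)
qed

lemma monic_complex_poly_factorization:
  fixes Q :: "complex poly"
  assumes "lead_coeff Q = 1"
  obtains r where "\<And>z. poly Q z = (\<Prod>p\<in>{1..degree Q}. z - r p)"
    and "image_mset r (mset_set {1..degree Q}) = proots Q"
proof -
  obtain xs where xs: "mset xs = proots Q" using ex_mset by blast
  have "length xs = degree Q" using size_proots_complex[of Q] xs by (metis size_mset)
  define r where "r p = xs ! (p - 1)" for p
  have r_image: "image_mset r (mset_set {1..degree Q}) = proots Q"
    unfolding r_def using image_mset_nth_pred[of xs] \<open>length xs = degree Q\<close> xs by simp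
  have "poly Q z = (\<Prod>x\<in>#proots Q. z - x)" for z
    using arg_cong[OF complex_poly_decompose_multiset[of Q], of "\<lambda>q. poly q z"] assms
    by (simp add: poly_prod_mset)
  also have "(\<Prod>x\<in>#proots Q. z - x) = (\<Prod>p\<in>{1..degree Q}. z - r p)" for z
    by (simp add: prod_unfold_prod_mset r_image[symmetric] multiset.map_comp o_def)
  finally show thesis using that r_image by blast
qed

lemma monic_poly_factorization:
  fixes c :: "nat \<Rightarrow> complex"
  shows "\<exists>r. (\<forall>z. z ^ m + (\<Sum>l\<in>{1..m}. c l * z ^ (m - l)) = (\<Prod>p\<in>{1..m}. z - r p))
             \<and> ((\<forall>l. c l \<in> \<real>) \<longrightarrow> conj_closed r m)"
proof -
  define Q where "Q = monom 1 m + (\<Sum>l\<in>{1..m}. monom (c l) (m - l))"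
  have coeff_Q: "coeff Q i = (if m = i then 1 else 0) + (\<Sum>l\<in>{1..m}. if m - l = i then c l else 0)"
    for i
    unfolding Q_def by (simp add: coeff_sum coeff_monom)
  have "coeff Q m = 1" by (auto simp: coeff_Q intro!: sum.neutral)
  moreover have "degree Q \<le> m" by (rule degree_le) (auto simp: coeff_Q intro!: sum.neutral)
  moreover have "m \<le> degree Q" using \<open>coeff Q m = 1\<close> by (intro le_degree) simp
  ultimately have "degree Q = m" by simp
  with \<open>coeff Q m = 1\<close> have "lead_coeff Q = 1" by simp
  then obtain r where factor: "\<And>z. poly Q z = (\<Prod>p\<in>{1..m}. z - r p)"
    and r_image: "image_mset r (mset_set {1..m}) = proots Q"
    using monic_complex_poly_factorization[of Q] unfolding \<open>degree Q = m\<close> by blast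
  have "z ^ m + (\<Sum>l\<in>{1..m}. c l * z ^ (m - l)) = (\<Prod>p\<in>{1..m}. z - r p)" for z
    using factor[of z] by (simp add: Q_def poly_monom poly_sum)
  moreover have "conj_closed r m" if "\<forall>l. c l \<in> \<real>"
  proof -
    have "image_mset cnj (proots Q) = proots Q"
      by (rule proots_cnj_real_poly) (use that in \<open>auto simp: coeff_Q intro!: Reals_add sum_in_Reals\<close>)
    thus ?thesis unfolding conj_closed_def r_image .
  qed
  ultimately show ?thesis by blast
qed

lemma monic_poly_factorization_cnj:
  fixes c r :: "nat \<Rightarrow> complex"
  assumes "\<And>z. z ^ m + (\<Sum>l\<in>{1..m}. c l * z ^ (m - l)) = (\<Prod>p\<in>{1..m}. z - r p)"
  shows "z ^ m + (\<Sum>l\<in>{1..m}. cnj (c l) * z ^ (m - l)) = (\<Prod>p\<in>{1..m}. z - cnj (r p))"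
  using arg_cong[OF assms[of "cnj z"], of cnj] by simp

text \<open>For real data the transform at \<open>n - j\<close> is the conjugate of the one at \<open>j\<close>
  (\<open>dft_pcx_reflect\<close>), so only the roots for \<open>2 * j \<le> n\<close> can be chosen freely.\<close>

definition hermitian_extension ::
    "nat \<Rightarrow> (nat \<Rightarrow> nat \<Rightarrow> complex) \<Rightarrow> nat \<Rightarrow> nat \<Rightarrow> complex" where
  "hermitian_extension n R j p = (if n < 2 * j then cnj (R (n - j) p) else R j p)"

lemma dft_uroot_hermitian_extension:
  assumes "n > 0" "j < n"
  shows "dft n j (uroot n (R 0) (R (n div 2)) (\<lambda>k p. Re (R k p)) (\<lambda>k p. Im (R k p)) p)
       = hermitian_extension n R j p"
  using dft_uroot[OF assms] by (auto simp: hermitian_extension_def complex_eq_iff)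

lemma dft_polyP_factorization:
  assumes n: "n > 0" and "j < n"
    and R: "\<And>j z. z ^ m + (\<Sum>l\<in>{1..m}. dft n j (pcx n (a l)) * z ^ (m - l))
                   = (\<Prod>p\<in>{1..m}. z - R j p)"
  shows "dft n j (polyP n m a u) = (\<Prod>p\<in>{1..m}. dft n j (pcx n u) - hermitian_extension n R j p)"
proof -
  have "z ^ m + (\<Sum>l\<in>{1..m}. dft n j (pcx n (a l)) * z ^ (m - l))
      = (\<Prod>p\<in>{1..m}. z - hermitian_extension n R j p)" for z
  proof (cases "n < 2 * j")
    case True
    have "dft n j (pcx n (a l)) = cnj (dft n (n - j) (pcx n (a l)))" for l
      using dft_pcx_reflect[OF n, of "n - j"] \<open>j < n\<close> by simp
    thus ?thesis using monic_poly_factorization_cnj[OF R] True by (simp add: hermitian_extension_def)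
  next
    case False
    hence "hermitian_extension n R j p = R j p" for p by (simp add: hermitian_extension_def)
    thus ?thesis by (simp only: R)
  qed
  thus ?thesis by (simp add: dft_polyP[OF n])
qed

theorem mainTheorem18:
  fixes n m :: nat and a :: "nat \<Rightarrow> nat \<Rightarrow> real"
  assumes "n \<ge> 2" and "m \<ge> 1"
  shows "\<exists>(vp :: nat \<Rightarrow> complex) (vm :: nat \<Rightarrow> complex) (v :: nat \<Rightarrow> nat \<Rightarrow> real) (vt :: nat \<Rightarrow> nat \<Rightarrow> real).
           conj_closed vp m \<and> (even n \<longrightarrow> conj_closed vm m) \<and>
           (\<forall>u :: nat \<Rightarrow> real. polyP n m a u = pprod n (\<lambda>p. psub n (pcx n u) (uroot n vp vm v vt p)) m)"
proof -
  have n: "n > 0" using assms(1) by simp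
  obtain R where R: "\<And>j z. z ^ m + (\<Sum>l\<in>{1..m}. dft n j (pcx n (a l)) * z ^ (m - l))
                            = (\<Prod>p\<in>{1..m}. z - R j p)"
    and R_conj_closed: "\<And>j. \<forall>l. dft n j (pcx n (a l)) \<in> \<real> \<Longrightarrow> conj_closed (R j) m"
    using monic_poly_factorization[of m "\<lambda>l. dft n _ (pcx n (a l))"] by metis
  let ?u = "\<lambda>p. uroot n (R 0) (R (n div 2)) (\<lambda>k p. Re (R k p)) (\<lambda>k p. Im (R k p)) p"
  have "polyP n m a u = pprod n (\<lambda>p. psub n (pcx n u) (?u p)) m" for u
  proof (rule dft_injective[OF n])
    show "dft n j (polyP n m a u) = dft n j (pprod n (\<lambda>p. psub n (pcx n u) (?u p)) m)" if "j < n" for j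
      by (simp add: dft_polyP_factorization[OF n that R] dft_pprod[OF n] dft_psub
          dft_uroot_hermitian_extension[OF n that])
  qed (use n in \<open>simp_all add: polyP_def padd_def pprod_eq_0_outside\<close>)
  moreover have "conj_closed (R 0) m" "even n \<longrightarrow> conj_closed (R (n div 2)) m"
    using R_conj_closed dft_pcx_real[OF n] by auto
  ultimately show ?thesis by blast
qed

end
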